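(* Let $\mathbb{B}$ be a sized CPO with size ordinal $\zeta_{\mathbb{B}}$ and set of maximal elements $B$, let $S$ be a set, $h:S\times B^m\to B$ and $g_i:S\to S$ ($i=1,\ldots,m$). Suppose that for each $x\in S$, $\eta_h^x:\mathrm{On}(\zeta_{\mathbb{B}})^m\to\mathrm{On}(\zeta_{\mathbb{B}})$ is a production function for $\bar y\mapsto h(x,\bar y)$, and that $\eta_h^x(\alpha_1,\ldots,\alpha_m)>\min_{i=1,\ldots,m}\alpha_i$ for each $x\in S$ and all $\alpha_1,\ldots,\alpha_m\le\zeta_{\mathbb{B}}$ such that $\alpha_k<\zeta_{\mathbb{B}}$ for some $1\le k\le m$. Then there exists a unique function $f:S\to B$ satisfying $f(x)=h(x,f(g_1(x)),\ldots,f(g_m(x)))$ for all $x\in S$.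
   Context: A CPO is a partial order with a least element in which every directed set has a supremum; continuity means preservation of directed suprema; products are ordered componentwise. $\mathrm{On}(\zeta)$ is the set of ordinals $\le\zeta$. A sized CPO is a tuple $\langle\mathbb{B},\zeta,s,\mathtt{cut}\rangle$ where $\mathbb{B}$ is a CPO, $\zeta$ an ordinal, $s:\mathbb{B}\to\mathrm{On}(\zeta)$, $\mathtt{cut}:\mathrm{On}(\zeta)\times\mathbb{B}\to\mathbb{B}$, such that: $s$ is surjective and continuous; $s(x)=\zeta$ iff $x$ is maximal; $\mathtt{cut}$ is monotone in both arguments; $s(\mathtt{cut}(\alpha,x))=\alpha$ if $s(x)>\alpha$; $\mathtt{cut}(\alpha,x)=x$ if $s(x)\le\alpha$. A function between CPOs is regular if it is monotone and maps maximal elements to maximal elements. A production function for a function $f:B^m\to B$ (between sets of maximal elements) is any $\eta:\mathrm{On}(\zeta_{\mathbb{B}})^m\to\mathrm{On}(\zeta_{\mathbb{B}})$ such that there is a regular $f^*:\mathbb{B}^m\to\mathbb{B}$ extending $f$ with $\eta(s(y_1),\ldots,s(y_m))=s(f^*(y_1,\ldots,y_m))$ for all $y_i\in\mathbb{B}$. *)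

theory Defs
  imports "HOL-Library.FuncSet"
begin

text \<open>A CPO is modelled as a type of class order (the carrier is the whole type).
  Ordinals \<le> zeta are modelled as the initial segment {..zeta} of a well-ordered type.\<close>

definition directed :: "'b::order set \<Rightarrow> bool" where
  "directed D \<longleftrightarrow> D \<noteq> {} \<and> (\<forall>x\<in>D. \<forall>y\<in>D. \<exists>z\<in>D. x \<le> z \<and> y \<le> z)"

definition is_lub :: "'b::order set \<Rightarrow> 'b \<Rightarrow> bool" where
  "is_lub D u \<longleftrightarrow> (\<forall>x\<in>D. x \<le> u) \<and> (\<forall>v. (\<forall>x\<in>D. x \<le> v) \<longrightarrow> u \<le> v)"

definition is_cpo :: "'b::order itself \<Rightarrow> bool" where
  "is_cpo _ \<longleftrightarrow> (\<exists>b::'b. \<forall>x. b \<le> x) \<and> (\<forall>D::'b set. directed D \<longrightarrow> (\<exists>u. is_lub D u))"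

definition maximal :: "'b::order \<Rightarrow> bool" where
  "maximal x \<longleftrightarrow> (\<forall>y. x \<le> y \<longrightarrow> y = x)"

text \<open>Sized CPO \<langle>B, zeta, s, ct\<rangle>; On(zeta) = {..zeta}.
  Continuity of s: s maps the supremum of a directed set to the supremum of its image
  (in the ordinals, i.e. the well-order).\<close>

definition sized_cpo :: "'o::wellorder \<Rightarrow> ('b::order \<Rightarrow> 'o) \<Rightarrow> ('o \<Rightarrow> 'b \<Rightarrow> 'b) \<Rightarrow> bool" where
  "sized_cpo zeta s ct \<longleftrightarrow>
     is_cpo TYPE('b) \<and>
     range s = {..zeta} \<and>
     (\<forall>D u. directed D \<longrightarrow> is_lub D u \<longrightarrow> is_lub (s ` D) (s u)) \<and>
     (\<forall>x. s x = zeta \<longleftrightarrow> maximal x) \<and>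
     (\<forall>\<alpha> \<beta> x y. \<alpha> \<le> \<beta> \<longrightarrow> \<beta> \<le> zeta \<longrightarrow> x \<le> y \<longrightarrow> ct \<alpha> x \<le> ct \<beta> y) \<and>
     (\<forall>\<alpha> x. \<alpha> \<le> zeta \<longrightarrow> s x > \<alpha> \<longrightarrow> s (ct \<alpha> x) = \<alpha>) \<and>
     (\<forall>\<alpha> x. \<alpha> \<le> zeta \<longrightarrow> s x \<le> \<alpha> \<longrightarrow> ct \<alpha> x = x)"

definition regular_fun :: "nat \<Rightarrow> ('b::order list \<Rightarrow> 'b) \<Rightarrow> bool" where
  "regular_fun m F \<longleftrightarrow>
     (\<forall>xs ys. length xs = m \<longrightarrow> length ys = m \<longrightarrow> list_all2 (\<le>) xs ys \<longrightarrow> F xs \<le> F ys) \<and>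
     (\<forall>ys. length ys = m \<longrightarrow> list_all maximal ys \<longrightarrow> maximal (F ys))"

definition production_function ::
  "nat \<Rightarrow> ('b::order \<Rightarrow> 'o::wellorder) \<Rightarrow> ('b list \<Rightarrow> 'b) \<Rightarrow> ('o list \<Rightarrow> 'o) \<Rightarrow> bool" where
  "production_function m s f \<eta> \<longleftrightarrow>
     (\<exists>F. regular_fun m F \<and>
          (\<forall>ys. length ys = m \<longrightarrow> list_all maximal ys \<longrightarrow> F ys = f ys) \<and>
          (\<forall>ys. length ys = m \<longrightarrow> \<eta> (map s ys) = s (F ys)))"

end

theory Submission
  imports Defs
begin

text \<open>Choose regular extensions of the maps \<open>h x\<close>. Their recursion has a least solution \<open>f\<^sub>0\<close> in the
  pointwise-ordered function space, and every solution lies above it. By the production functions the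
  sizes \<open>s (f\<^sub>0 x)\<close> obey a recursion of their own; at a point where this size is least, the growth
  condition would make it strictly larger than itself unless it is already \<open>zeta\<close>. So \<open>f\<^sub>0\<close> is
  maximal on \<open>S\<close>, hence a solution of the original recursion lying below, and thus equal to, any other.\<close>

definition pointwise_lub :: "('s \<Rightarrow> 'b::order) set \<Rightarrow> 's \<Rightarrow> 'b" where
  "pointwise_lub A x = (SOME u. is_lub ((\<lambda>f. f x) ` A) u)"

lemma is_lub_pointwise_lub:
  fixes A :: "('s \<Rightarrow> 'b::order) set"
  assumes cpo: "is_cpo TYPE('b)" and chain: "Complete_Partial_Order.chain (\<le>) A"
  shows "is_lub ((\<lambda>f. f x) ` A) (pointwise_lub A x)"
  unfolding pointwise_lub_def
proof (rule someI_ex)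
  show "\<exists>u. is_lub ((\<lambda>f. f x) ` A) u"
  proof (cases "A = {}")
    case True
    from cpo obtain b :: 'b where "\<forall>y. b \<le> y" unfolding is_cpo_def by blast
    with True show ?thesis unfolding is_lub_def by auto
  next
    case False
    with chain have "directed ((\<lambda>f. f x) ` A)"
      unfolding directed_def by (auto simp: Complete_Partial_Order.chain_def le_fun_def)
    with cpo show ?thesis unfolding is_cpo_def by blast
  qed
qed

lemma ccpo_pointwise_lub:
  assumes "is_cpo TYPE('b::order)"
  shows "class.ccpo (pointwise_lub :: ('s \<Rightarrow> 'b) set \<Rightarrow> _) (\<le>) (<)"
proof unfold_locales
  fix A :: "('s \<Rightarrow> 'b) set"
  assume chain: "Complete_Partial_Order.chain (\<le>) A"
  note lub = is_lub_pointwise_lub[OF assms chain]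
  show "f \<le> pointwise_lub A" if "f \<in> A" for f
  proof (rule le_funI)
    fix x
    from lub[of x] that show "f x \<le> pointwise_lub A x"
      unfolding is_lub_def by blast
  qed
  show "pointwise_lub A \<le> z" if "\<And>f. f \<in> A \<Longrightarrow> f \<le> z" for z
  proof (rule le_funI)
    fix x
    have "\<forall>y\<in>(\<lambda>f. f x) ` A. y \<le> z x"
      using that by (auto dest: le_funD)
    with lub[of x] show "pointwise_lub A x \<le> z x"
      unfolding is_lub_def by blast
  qed
qed

definition recursion_step ::
    "'s set \<Rightarrow> ('s \<Rightarrow> 'b list \<Rightarrow> 'b) \<Rightarrow> nat \<Rightarrow> (nat \<Rightarrow> 's \<Rightarrow> 's) \<Rightarrow> ('s \<Rightarrow> 'b) \<Rightarrow> 's \<Rightarrow> 'b" where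
  "recursion_step S F m g f x = (if x \<in> S then F x (map (\<lambda>i. f (g i x)) [0..<m]) else f x)"

lemma monotone_recursion_step:
  fixes F :: "'s \<Rightarrow> 'b::order list \<Rightarrow> 'b"
  assumes "\<forall>x\<in>S. regular_fun m (F x)"
  shows "monotone (\<le>) (\<le>) (recursion_step S F m g)"
proof (rule monotoneI, rule le_funI)
  fix f f' :: "'s \<Rightarrow> 'b" and x
  assume le: "f \<le> f'"
  have "list_all2 (\<le>) (map (\<lambda>i. f (g i x)) [0..<m]) (map (\<lambda>i. f' (g i x)) [0..<m])"
    using le by (auto simp: list_all2_conv_all_nth le_fun_def)
  with assms le show "recursion_step S F m g f x \<le> recursion_step S F m g f' x"
    by (auto simp: recursion_step_def regular_fun_def le_fun_def)
qed

lemma least_solution_exists: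
  fixes F :: "'s \<Rightarrow> 'b::order list \<Rightarrow> 'b"
  assumes cpo: "is_cpo TYPE('b)" and regular: "\<forall>x\<in>S. regular_fun m (F x)"
  obtains f\<^sub>0 :: "'s \<Rightarrow> 'b"
  where "\<forall>x\<in>S. f\<^sub>0 x = F x (map (\<lambda>i. f\<^sub>0 (g i x)) [0..<m])"
    and "\<And>f. \<forall>x\<in>S. f x = F x (map (\<lambda>i. f (g i x)) [0..<m]) \<Longrightarrow> f\<^sub>0 \<le> f"
proof
  note ccpo = ccpo_pointwise_lub[OF cpo] and mono = monotone_recursion_step[OF regular]
  let ?f\<^sub>0 = "ccpo.fixp (pointwise_lub :: ('s \<Rightarrow> 'b) set \<Rightarrow> _) (\<le>) (recursion_step S F m g)"
  show "\<forall>x\<in>S. ?f\<^sub>0 x = F x (map (\<lambda>i. ?f\<^sub>0 (g i x)) [0..<m])"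
    using fun_cong[OF ccpo.fixp_unfold[OF ccpo mono]] by (simp add: recursion_step_def)
  fix f
  assume "\<forall>x\<in>S. f x = F x (map (\<lambda>i. f (g i x)) [0..<m])"
  then have "recursion_step S F m g f = f"
    by (auto simp: recursion_step_def)
  then show "?f\<^sub>0 \<le> f"
    by (intro ccpo.fixp_lowerbound[OF ccpo mono]) simp
qed

lemma regular_size_replicate_top:
  assumes sized: "sized_cpo zeta s ct" and regular: "regular_fun m F"
    and size: "\<forall>ys. length ys = m \<longrightarrow> \<eta> (map s ys) = s (F ys)"
  shows "\<eta> (replicate m zeta) = zeta"
proof -
  from sized have "zeta \<in> range s" and s_top: "\<And>x. s x = zeta \<longleftrightarrow> maximal x"
    unfolding sized_cpo_def by auto
  then obtain b where b: "maximal b" "s b = zeta" by auto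
  have "maximal (F (replicate m b))"
    using regular b(1) unfolding regular_fun_def by (simp add: list_all_iff)
  then show ?thesis
    using size[rule_format, of "replicate m b"] b(2) s_top by simp
qed

lemma recursive_size_eq_top:
  fixes \<sigma> :: "'s \<Rightarrow> 'o::wellorder"
  assumes g_maps: "\<forall>i<m. \<forall>x\<in>S. g i x \<in> S"
    and bounded: "\<forall>x\<in>S. \<sigma> x \<le> zeta"
    and rec: "\<forall>x\<in>S. \<sigma> x = \<eta> x (map (\<lambda>i. \<sigma> (g i x)) [0..<m])"
    and top: "\<forall>x\<in>S. \<eta> x (replicate m zeta) = zeta"
    and grow: "\<forall>x\<in>S. \<forall>\<alpha>s. length \<alpha>s = m \<longrightarrow> list_all (\<lambda>\<alpha>. \<alpha> \<le> zeta) \<alpha>s \<longrightarrow>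
                  (\<exists>k<m. \<alpha>s ! k < zeta) \<longrightarrow> \<eta> x \<alpha>s > Min (set \<alpha>s)"
    and "x \<in> S"
  shows "\<sigma> x = zeta"
proof (rule ccontr)
  assume "\<sigma> x \<noteq> zeta"
  define \<alpha> where "\<alpha> = (LEAST a. a \<in> \<sigma> ` S)"
  have \<alpha>_least: "\<alpha> \<le> \<sigma> z" if "z \<in> S" for z
    unfolding \<alpha>_def using that by (intro Least_le) blast
  have "\<alpha> \<in> \<sigma> ` S"
    unfolding \<alpha>_def using \<open>x \<in> S\<close> by (intro LeastI) blast
  then obtain y where y: "y \<in> S" "\<sigma> y = \<alpha>" by auto
  have "\<alpha> < zeta"
    using \<alpha>_least[OF \<open>x \<in> S\<close>] bounded \<open>x \<in> S\<close> \<open>\<sigma> x \<noteq> zeta\<close> by force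
  define \<alpha>s where "\<alpha>s = map (\<lambda>i. \<sigma> (g i y)) [0..<m]"
  have args_in_S: "g i y \<in> S" if "i < m" for i
    using g_maps y(1) that by blast
  have \<sigma>y: "\<sigma> y = \<eta> y \<alpha>s"
    using rec y(1) unfolding \<alpha>s_def by blast
  show False
  proof (cases "\<exists>k<m. \<alpha>s ! k < zeta")
    case True
    have "length \<alpha>s = m" "list_all (\<lambda>\<alpha>. \<alpha> \<le> zeta) \<alpha>s"
      using bounded args_in_S by (auto simp: \<alpha>s_def list_all_iff)
    with True grow y(1) have "\<eta> y \<alpha>s > Min (set \<alpha>s)"
      by blast
    moreover have "Min (set \<alpha>s) \<in> set \<alpha>s"
      using True by (intro Min_in) (auto simp: \<alpha>s_def)
    then have "\<alpha> \<le> Min (set \<alpha>s)"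
      using \<alpha>_least args_in_S by (auto simp: \<alpha>s_def)
    ultimately show False
      using \<sigma>y y(2) by simp
  next
    case False
    have "\<sigma> (g i y) = zeta" if "i < m" for i
    proof -
      have "\<not> \<sigma> (g i y) < zeta"
        using False that by (simp add: \<alpha>s_def)
      with bounded args_in_S[OF that] show ?thesis
        by (auto simp: order_le_less)
    qed
    then have "\<alpha>s = replicate m zeta"
      by (simp add: \<alpha>s_def list_eq_iff_nth_eq)
    then show False
      using \<sigma>y top y \<open>\<alpha> < zeta\<close> by simp
  qed
qed

lemma solution_maximal_of_size_growth:
  assumes sized: "sized_cpo zeta s ct"
    and g_maps: "\<forall>i<m. \<forall>x\<in>S. g i x \<in> S"
    and regular: "\<forall>x\<in>S. regular_fun m (F x)"
    and size: "\<forall>x\<in>S. \<forall>ys. length ys = m \<longrightarrow> \<eta> x (map s ys) = s (F x ys)"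
    and grow: "\<forall>x\<in>S. \<forall>\<alpha>s. length \<alpha>s = m \<longrightarrow> list_all (\<lambda>\<alpha>. \<alpha> \<le> zeta) \<alpha>s \<longrightarrow>
                  (\<exists>k<m. \<alpha>s ! k < zeta) \<longrightarrow> \<eta> x \<alpha>s > Min (set \<alpha>s)"
    and rec: "\<forall>x\<in>S. f x = F x (map (\<lambda>i. f (g i x)) [0..<m])"
    and "x \<in> S"
  shows "maximal (f x)"
proof -
  from sized have s_le: "\<And>b. s b \<le> zeta" and s_top: "\<And>b. s b = zeta \<longleftrightarrow> maximal b"
    unfolding sized_cpo_def by (auto simp: set_eq_iff)
  have size_rec: "s (f y) = \<eta> y (map (\<lambda>i. s (f (g i y))) [0..<m])" if "y \<in> S" for y
  proof -
    have "s (f y) = s (F y (map (\<lambda>i. f (g i y)) [0..<m]))"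
      using rec that by simp
    also have "\<dots> = \<eta> y (map s (map (\<lambda>i. f (g i y)) [0..<m]))"
      using size that by (metis diff_zero length_map length_upt)
    finally show ?thesis
      by (simp add: comp_def)
  qed
  have top: "\<forall>y\<in>S. \<eta> y (replicate m zeta) = zeta"
    using regular_size_replicate_top[OF sized] regular size by blast
  have "s (f x) = zeta"
    by (rule recursive_size_eq_top[OF g_maps _ _ top grow \<open>x \<in> S\<close>]) (auto simp: s_le intro: size_rec)
  then show ?thesis
    by (simp add: s_top)
qed

lemma solution_iff_of_eq_on_maximal:
  assumes g_maps: "\<forall>i<m. \<forall>x\<in>S. g i x \<in> S"
    and F_eq_h: "\<forall>x\<in>S. \<forall>ys. length ys = m \<longrightarrow> list_all maximal ys \<longrightarrow> F x ys = h x ys"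
    and maximal: "\<forall>x\<in>S. maximal (f x)"
  shows "(\<forall>x\<in>S. f x = F x (map (\<lambda>i. f (g i x)) [0..<m])) \<longleftrightarrow>
      (\<forall>x\<in>S. f x = h x (map (\<lambda>i. f (g i x)) [0..<m]))"
proof (intro ball_cong)
  fix x
  assume "x \<in> S"
  with g_maps maximal have "list_all maximal (map (\<lambda>i. f (g i x)) [0..<m])"
    by (auto simp: list_all_iff)
  with F_eq_h \<open>x \<in> S\<close> show "f x = F x (map (\<lambda>i. f (g i x)) [0..<m]) \<longleftrightarrow>
      f x = h x (map (\<lambda>i. f (g i x)) [0..<m])"
    by simp
qed simp

lemma ex1_solution_of_maximal_lower_bound:
  fixes f\<^sub>0 :: "'s \<Rightarrow> 'b::order"
  assumes g_maps: "\<forall>i<m. \<forall>x\<in>S. g i x \<in> S"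
    and maximal: "\<forall>x\<in>S. maximal (f\<^sub>0 x)"
    and solves: "\<forall>x\<in>S. f\<^sub>0 x = h x (map (\<lambda>i. f\<^sub>0 (g i x)) [0..<m])"
    and least: "\<And>f. f \<in> S \<rightarrow>\<^sub>E {b. maximal b} \<Longrightarrow>
      \<forall>x\<in>S. f x = h x (map (\<lambda>i. f (g i x)) [0..<m]) \<Longrightarrow> \<forall>x\<in>S. f\<^sub>0 x \<le> f x"
  shows "\<exists>!f. f \<in> S \<rightarrow>\<^sub>E {b. maximal b} \<and> (\<forall>x\<in>S. f x = h x (map (\<lambda>i. f (g i x)) [0..<m]))"
proof (rule ex1I[of _ "restrict f\<^sub>0 S"])
  have "restrict f\<^sub>0 S x = h x (map (\<lambda>i. restrict f\<^sub>0 S (g i x)) [0..<m])" if "x \<in> S" for x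
  proof -
    have "map (\<lambda>i. restrict f\<^sub>0 S (g i x)) [0..<m] = map (\<lambda>i. f\<^sub>0 (g i x)) [0..<m]"
      using g_maps that by simp
    with solves that show ?thesis
      by (metis restrict_apply')
  qed
  with maximal show "restrict f\<^sub>0 S \<in> S \<rightarrow>\<^sub>E {b. maximal b} \<and>
      (\<forall>x\<in>S. restrict f\<^sub>0 S x = h x (map (\<lambda>i. restrict f\<^sub>0 S (g i x)) [0..<m]))"
    by simp
next
  fix f
  assume f: "f \<in> S \<rightarrow>\<^sub>E {b. maximal b} \<and> (\<forall>x\<in>S. f x = h x (map (\<lambda>i. f (g i x)) [0..<m]))"
  then have below: "\<forall>x\<in>S. f\<^sub>0 x \<le> f x"
    using least by blast
  show "f = restrict f\<^sub>0 S"
  proof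
    fix x
    show "f x = restrict f\<^sub>0 S x"
    proof (cases "x \<in> S")
      case True
      with below maximal show ?thesis
        unfolding maximal_def by simp
    next
      case False
      with PiE_arb[OF conjunct1[OF f]] show ?thesis
        by simp
    qed
  qed
qed

theorem corollary4p8:
  fixes zeta :: "'o::wellorder"
    and s :: "'b::order \<Rightarrow> 'o"
    and ct :: "'o \<Rightarrow> 'b \<Rightarrow> 'b"
    and m :: nat
    and S :: "'s set"
    and h :: "'s \<Rightarrow> 'b list \<Rightarrow> 'b"
    and g :: "nat \<Rightarrow> 's \<Rightarrow> 's"
    and \<eta> :: "'s \<Rightarrow> 'o list \<Rightarrow> 'o"
  assumes sized: "sized_cpo zeta s ct"
    and g_maps: "\<forall>i<m. \<forall>x\<in>S. g i x \<in> S"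
    and h_maps: "\<forall>x\<in>S. \<forall>ys. length ys = m \<longrightarrow> list_all maximal ys \<longrightarrow> maximal (h x ys)"
    and prod: "\<forall>x\<in>S. production_function m s (h x) (\<eta> x)"
    and grow: "\<forall>x\<in>S. \<forall>\<alpha>s. length \<alpha>s = m \<longrightarrow> list_all (\<lambda>\<alpha>. \<alpha> \<le> zeta) \<alpha>s \<longrightarrow>
                  (\<exists>k<m. \<alpha>s ! k < zeta) \<longrightarrow> \<eta> x \<alpha>s > Min (set \<alpha>s)"
  shows "\<exists>!f. f \<in> S \<rightarrow>\<^sub>E {b. maximal b} \<and>
              (\<forall>x\<in>S. f x = h x (map (\<lambda>i. f (g i x)) [0..<m]))"
proof -
  from prod obtain F where regular: "\<forall>x\<in>S. regular_fun m (F x)"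
    and F_eq_h: "\<forall>x\<in>S. \<forall>ys. length ys = m \<longrightarrow> list_all maximal ys \<longrightarrow> F x ys = h x ys"
    and size: "\<forall>x\<in>S. \<forall>ys. length ys = m \<longrightarrow> \<eta> x (map s ys) = s (F x ys)"
    unfolding production_function_def by metis
  from sized have "is_cpo TYPE('b)"
    unfolding sized_cpo_def by blast
  then obtain f\<^sub>0 where f\<^sub>0_rec: "\<forall>x\<in>S. f\<^sub>0 x = F x (map (\<lambda>i. f\<^sub>0 (g i x)) [0..<m])"
    and f\<^sub>0_least: "\<And>f. \<forall>x\<in>S. f x = F x (map (\<lambda>i. f (g i x)) [0..<m]) \<Longrightarrow> f\<^sub>0 \<le> f"
    using least_solution_exists regular by blast
  have f\<^sub>0_maximal: "\<forall>x\<in>S. maximal (f\<^sub>0 x)"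
    using solution_maximal_of_size_growth[OF sized g_maps regular size grow f\<^sub>0_rec] by blast
  note solution_iff = solution_iff_of_eq_on_maximal[OF g_maps F_eq_h]
  show ?thesis
  proof (rule ex1_solution_of_maximal_lower_bound[OF g_maps f\<^sub>0_maximal])
    show "\<forall>x\<in>S. f\<^sub>0 x = h x (map (\<lambda>i. f\<^sub>0 (g i x)) [0..<m])"
      using f\<^sub>0_rec solution_iff[OF f\<^sub>0_maximal] by blast
    fix f
    assume "f \<in> S \<rightarrow>\<^sub>E {b. maximal b}" and f_solves: "\<forall>x\<in>S. f x = h x (map (\<lambda>i. f (g i x)) [0..<m])"
    from this(1) have "\<forall>x\<in>S. maximal (f x)"
      by auto
    with f_solves have "f\<^sub>0 \<le> f"
      using f\<^sub>0_least solution_iff by blast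
    then show "\<forall>x\<in>S. f\<^sub>0 x \<le> f x"
      by (simp add: le_fun_def)
  qed
qed

end
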